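(* For $D \in \mathbb{R}^{m\times n}$ and $Q \in \mathbb{Z}^{m\times n}$ whose $j$th column stores the sorting of the $j$th column of $D$, the call QuickLexSortAllSeq$(D,Q,(),\mathbf{0})$ (empty sequence, zero vector of length $m$) has running time $O\!\left(m \sum_{i=1}^n m \frac{n!}{(n-i)!}\right)$ and space requirements $O(mn)$.
   Context: "The $j$th column of $Q$ stores the sorting of the $j$th column of $D$" means $(Q_{0j},\ldots,Q_{m-1,j})$ is a permutation of $\{0,\ldots,m-1\}$ with $D_{Q_{0j},j} \le \cdots \le D_{Q_{m-1,j},j}$. Model: unit-cost random access machine; outputting a vector of length $m$ costs $O(m)$; space includes the inputs. QuickLexSortRefine$(D,Q,i,L)$: initialize integer arrays $\mathrm{IDval},\mathrm{IDvalInit},\mathrm{subID},\mathrm{newCount},\mathrm{numNewID}$ of length $m$ to zero. For $j=0,\ldots,m-1$: let $r := Q[j,i]$, $\ell := L[r]$; if $\mathrm{IDvalInit}[\ell]=0$, set $\mathrm{IDvalInit}[\ell]:=1$, $\mathrm{IDval}[\ell]:=D[r,i]$; otherwise if $\mathrm{IDval}[\ell]\neq D[r,i]$, set $\mathrm{IDval}[\ell]:=D[r,i]$ and increment $\mathrm{newCount}[\ell]$; then set $\mathrm{subID}[r]:=\mathrm{newCount}[\ell]$. Set $\mathrm{numNewID}[m-1]:=\sum_{j=0}^{m-2}\mathrm{newCount}[j]$ and for $j=m-2,\ldots,1$, $\mathrm{numNewID}[j]:=\mathrm{numNewID}[j+1]-\mathrm{newCount}[j]$. Return $L'$ with $L'[j]:=L[j]+\mathrm{numNewID}[L[j]]+\mathrm{subID}[j]$.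 QuickLexSortAllSeq$(D,Q,(a_1,\ldots,a_p),L)$ (recursive): for each $i \in \{0,\ldots,n-1\}\setminus\{a_1,\ldots,a_p\}$: set $L' :=$ QuickLexSortRefine$(D,Q,i,L)$, output $L'$, and call QuickLexSortAllSeq$(D,Q,(a_1,\ldots,a_p,i),L')$. *)

theory Defs
  imports Complex_Main
begin

text \<open>
  Matrices: D :: nat => nat => real with D r c the entry in row r, column c
  (rows r < m, columns c < n); Q :: nat => nat => nat likewise.
  Arrays are lists. Every procedure is instrumented with a step counter
  (unit-cost RAM: one tick per constant-time loop iteration / elementary
  action, length-m array initialisation costs m, outputting a length-m
  vector costs m) and with its peak working space (in machine words).
\<close>

definition col_sorting :: "nat \<Rightarrow> nat \<Rightarrow> (nat \<Rightarrow> nat \<Rightarrow> real) \<Rightarrow> (nat \<Rightarrow> nat \<Rightarrow> nat) \<Rightarrow> bool" where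
  "col_sorting m n D Q \<longleftrightarrow>
     (\<forall>j<n. bij_betw (\<lambda>k. Q k j) {0..<m} {0..<m}
            \<and> (\<forall>k. Suc k < m \<longrightarrow> D (Q k j) j \<le> D (Q (Suc k) j) j))"

definition refine_step ::
  "(nat \<Rightarrow> nat \<Rightarrow> real) \<Rightarrow> (nat \<Rightarrow> nat \<Rightarrow> nat) \<Rightarrow> nat \<Rightarrow> nat list
   \<Rightarrow> real list \<times> nat list \<times> nat list \<times> nat list \<times> nat \<Rightarrow> nat
   \<Rightarrow> real list \<times> nat list \<times> nat list \<times> nat list \<times> nat" where
  "refine_step D Q i L st j =
     (case st of (idv, ini, sub, nc, t) \<Rightarrow>
       (let r = Q j i; l = L ! r in
        if ini ! l = 0 then
          (idv[l := D r i], ini[l := 1], sub[r := nc ! l], nc, Suc t)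
        else if idv ! l \<noteq> D r i then
          (idv[l := D r i], ini, sub[r := Suc (nc ! l)], nc[l := Suc (nc ! l)], Suc t)
        else (idv, ini, sub[r := nc ! l], nc, Suc t)))"

text \<open>QuickLexSortRefine(D,Q,i,L) for an m-row matrix. Returns (L', time, peak space).\<close>

definition refine ::
  "(nat \<Rightarrow> nat \<Rightarrow> real) \<Rightarrow> (nat \<Rightarrow> nat \<Rightarrow> nat) \<Rightarrow> nat \<Rightarrow> nat \<Rightarrow> nat list
   \<Rightarrow> nat list \<times> nat \<times> nat" where
  "refine D Q m i L =
    (let t_init = 5 * m;
         (idv, ini, sub, nc, t1) =
            foldl (refine_step D Q i L)
              (replicate m 0, replicate m 0, replicate m 0, replicate m 0, 0) [0..<m];
         nn0 = replicate m 0;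
         nn1 = nn0[m - 1 := sum_list (take (m - 1) nc)];
         t_sum = m;
         (nn, t2) = foldl (\<lambda>(nn, t) j. (nn[j := nn ! Suc j - nc ! j], Suc t))
                      (nn1, 0) (rev [1..<m - 1]);
         L' = map (\<lambda>j. L ! j + nn ! (L ! j) + sub ! j) [0..<m];
         t_out = m
     in (L', t_init + t1 + t_sum + t2 + t_out, 6 * m + 4))"

text \<open>QuickLexSortAllSeq(D,Q,a,L): returns (sequence of output vectors,
  running time, peak working space of the call beyond the global data).
  The loop ranges over the remaining indices {0..n-1} minus set a, one tick
  per iteration; extending the sequence costs one tick.\<close>

function allseq ::
  "(nat \<Rightarrow> nat \<Rightarrow> real) \<Rightarrow> (nat \<Rightarrow> nat \<Rightarrow> nat) \<Rightarrow> nat \<Rightarrow> nat \<Rightarrow> nat list \<Rightarrow> nat list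
   \<Rightarrow> nat list list \<times> nat \<times> nat" where
  "allseq D Q m n a L =
    (let res = map (\<lambda>i.
            let rf = refine D Q m i L;
                L' = fst rf;
                rc = allseq D Q m n (a @ [i]) L'
            in (L' # fst rc,
                1 + fst (snd rf) + m + 1 + fst (snd rc),
                max (snd (snd rf)) (m + snd (snd rc))))
          (filter (\<lambda>i. i \<notin> set a) [0..<n])
     in (concat (map fst res),
         1 + sum_list (map (\<lambda>x. fst (snd x)) res),
         2 + foldr max (map (\<lambda>x. snd (snd x)) res) 0))"
  by pat_completeness auto
termination
proof (relation "measure (\<lambda>(D, Q, m, n, a, L). n - card (set a \<inter> {..<n}))", goal_cases)
  case 1 then show ?case by simp
next
  case (2 D Q m n a L i x)
  then have i: "i < n" "i \<notin> set a" by auto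
  have fin: "finite (set a \<inter> {..<n})" by simp
  have eq: "set (a @ [i]) \<inter> {..<n} = insert i (set a \<inter> {..<n})" using i by auto
  have c: "card (set (a @ [i]) \<inter> {..<n}) = Suc (card (set a \<inter> {..<n}))"
    using i fin by (simp add: eq)
  have "card (set (a @ [i]) \<inter> {..<n}) \<le> n"
    by (metis card_lessThan card_mono finite_lessThan inf_le2)
  then show ?case using c by simp
qed

text \<open>Space counts the inputs D and Q (m*n words each), the vector L (m words),
  the shared sequence/remaining-index structure (2n words), plus the peak
  working space of the recursion.\<close>

definition qls_time :: "(nat \<Rightarrow> nat \<Rightarrow> real) \<Rightarrow> (nat \<Rightarrow> nat \<Rightarrow> nat) \<Rightarrow> nat \<Rightarrow> nat \<Rightarrow> nat" where
  "qls_time D Q m n = fst (snd (allseq D Q m n [] (replicate m 0)))"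

definition qls_space :: "(nat \<Rightarrow> nat \<Rightarrow> real) \<Rightarrow> (nat \<Rightarrow> nat \<Rightarrow> nat) \<Rightarrow> nat \<Rightarrow> nat \<Rightarrow> nat" where
  "qls_space D Q m n = 2 * m * n + m + 2 * n + snd (snd (allseq D Q m n [] (replicate m 0)))"

end

theory Submission imports Defs begin

text \<open>
  The calls of QuickLexSortAllSeq form a tree whose nodes are the sequences of distinct
  indices from \<open>{0..<n}\<close>; there are \<open>\<Sum>i\<le>n. n!/(n-i)!\<close> of them. Each call costs
  \<open>O(1)\<close> of its own plus, per child, one QuickLexSortRefine and one output vector, i.e.
  \<open>O(m)\<close> per node of the tree. The recursion depth is at most
  \<open>n\<close> and every level keeps only one vector of length \<open>m\<close> alive, so the working space is
  \<open>O(mn)\<close>.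
\<close>

lemma foldl_refine_step_ticks:
  "snd (snd (snd (snd (foldl (refine_step D Q i L) st xs))))
     = snd (snd (snd (snd st))) + length xs"
  by (induction xs arbitrary: st) (auto simp: refine_step_def Let_def split: prod.splits)

lemma foldl_tick_counter:
  "snd (foldl (\<lambda>(x, t) j. (f x j, Suc t)) st xs) = snd st + length xs"
  by (induction xs arbitrary: st) (auto split: prod.splits)

lemma refine_cost:
  "fst (snd (refine D Q m i L)) \<le> 9 * m \<and> snd (snd (refine D Q m i L)) = 6 * m + 4"
proof -
  obtain idv ini sub nc t1 where loop1: "foldl (refine_step D Q i L)
      (replicate m 0, replicate m 0, replicate m 0, replicate m 0, 0) [0..<m] = (idv, ini, sub, nc, t1)"
    using prod_cases5 by blast
  obtain nn t2 where loop2: "foldl (\<lambda>(nn, t) j. (nn[j := nn ! Suc j - nc ! j], Suc t))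
      ((replicate m 0)[m - 1 := sum_list (take (m - 1) nc)], 0) (rev [1..<m - 1]) = (nn, t2)"
    by (rule prod.exhaust)
  have "t1 = m"
    using foldl_refine_step_ticks[of D Q i L
        "(replicate m 0, replicate m 0, replicate m 0, replicate m 0, 0)" "[0..<m]"] loop1
    by simp
  moreover have "t2 \<le> m"
    using foldl_tick_counter[of "\<lambda>nn j. nn[j := nn ! Suc j - nc ! j]"
        "((replicate m 0)[m - 1 := sum_list (take (m - 1) nc)], 0)" "rev [1..<m - 1]"] loop2
    by simp
  moreover have "refine D Q m i L = (map (\<lambda>j. L ! j + nn ! (L ! j) + sub ! j) [0..<m],
                                     5 * m + t1 + m + t2 + m, 6 * m + 4)"
    by (simp only: refine_def Let_def loop1 loop2 prod.case)
  ultimately show ?thesis by simp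
qed

text \<open>The number of sequences of distinct elements of an \<open>r\<close>-element set, i.e. of calls in
  the recursion below a call with \<open>r\<close> unused indices.\<close>

fun arrangements :: "nat \<Rightarrow> nat" where
  "arrangements 0 = 1"
| "arrangements (Suc r) = 1 + Suc r * arrangements r"

lemma arrangements_eq_sum: "real (arrangements r) = (\<Sum>i\<le>r. fact r / fact (r - i))"
proof (induction r)
  case 0
  then show ?case by simp
next
  case (Suc r)
  have "real (arrangements (Suc r)) = 1 + real (Suc r) * real (arrangements r)"
    by (simp add: algebra_simps)
  also have "\<dots> = 1 + (\<Sum>i\<le>r. real (Suc r) * (fact r / fact (r - i)))"
    by (simp add: Suc.IH sum_distrib_left algebra_simps)
  also have "\<dots> = (\<Sum>i\<le>Suc r. fact (Suc r) / fact (Suc r - i))"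
    unfolding sum.atMost_Suc_shift by (simp add: fact_Suc)
  finally show ?case .
qed

definition unused_indices :: "nat \<Rightarrow> nat list \<Rightarrow> nat list" where
  "unused_indices n a = filter (\<lambda>i. i \<notin> set a) [0..<n]"

lemma length_unused_indices: "length (unused_indices n a) = card ({..<n} - set a)"
proof -
  have "length (unused_indices n a) = card (set (unused_indices n a))"
    by (rule distinct_card [symmetric]) (simp add: unused_indices_def)
  also have "set (unused_indices n a) = {..<n} - set a"
    by (auto simp: unused_indices_def)
  finally show ?thesis .
qed

lemma length_unused_indices_append:
  assumes "i \<in> set (unused_indices n a)"
  shows "length (unused_indices n (a @ [i])) = length (unused_indices n a) - 1"
proof -
  have "{..<n} - set (a @ [i]) = ({..<n} - set a) - {i}" by auto
  moreover have "i \<in> {..<n} - set a" using assms by (auto simp: unused_indices_def)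
  ultimately show ?thesis by (simp add: length_unused_indices)
qed

declare allseq.simps [simp del]

lemma allseq_cost_eqs:
  "fst (snd (allseq D Q m n a L))
     = 1 + (\<Sum>i\<leftarrow>unused_indices n a. 2 + m + fst (snd (refine D Q m i L))
              + fst (snd (allseq D Q m n (a @ [i]) (fst (refine D Q m i L)))))"
  "snd (snd (allseq D Q m n a L))
     = 2 + foldr max (map (\<lambda>i. max (snd (snd (refine D Q m i L)))
              (m + snd (snd (allseq D Q m n (a @ [i]) (fst (refine D Q m i L))))))
            (unused_indices n a)) 0"
  unfolding unused_indices_def
  by (simp_all only: allseq.simps[of D Q m n a L])
     (simp_all add: Let_def o_def ac_simps)

lemma foldr_max_le: "(\<And>x. x \<in> set xs \<Longrightarrow> g x \<le> (B::nat)) \<Longrightarrow> foldr max (map g xs) 0 \<le> B"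
  by (induction xs) auto

text \<open>The refinement and output costs of a call are charged to the child they produce, so
  every node costs at most \<open>10m + 3\<close>; the root is spared the \<open>10m + 2\<close> of its (missing) parent
  edge, which is what makes the bound inductive.\<close>

lemma allseq_time:
  assumes "length (unused_indices n a) = r"
  shows "fst (snd (allseq D Q m n a L)) + (10 * m + 2) \<le> (10 * m + 3) * arrangements r"
  using assms
proof (induction r arbitrary: a L)
  case 0
  then show ?case by (simp add: allseq_cost_eqs(1)[of D Q m n a L])
next
  case (Suc r)
  let ?child = "\<lambda>i. allseq D Q m n (a @ [i]) (fst (refine D Q m i L))"
  have "2 + m + fst (snd (refine D Q m i L)) + fst (snd (?child i)) \<le> (10 * m + 3) * arrangements r"
    if "i \<in> set (unused_indices n a)" for i
  proof -
    have "length (unused_indices n (a @ [i])) = r"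
      using length_unused_indices_append[OF that] Suc.prems by simp
    then have "fst (snd (?child i)) + (10 * m + 2) \<le> (10 * m + 3) * arrangements r"
      by (rule Suc.IH)
    then show ?thesis using refine_cost[of D Q m i L] by linarith
  qed
  then have "(\<Sum>i\<leftarrow>unused_indices n a. 2 + m + fst (snd (refine D Q m i L)) + fst (snd (?child i)))
               \<le> (\<Sum>i\<leftarrow>unused_indices n a. (10 * m + 3) * arrangements r)"
    by (rule sum_list_mono)
  also have "\<dots> = Suc r * ((10 * m + 3) * arrangements r)"
    using Suc.prems by (simp add: sum_list_triv)
  finally have "fst (snd (allseq D Q m n a L)) \<le> 1 + Suc r * ((10 * m + 3) * arrangements r)"
    by (simp only: allseq_cost_eqs(1)[of D Q m n a L])
  moreover have "(10 * m + 3) * arrangements (Suc r)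
                   = (10 * m + 3) + Suc r * ((10 * m + 3) * arrangements r)"
    by (simp only: arrangements.simps distrib_left mult.left_commute mult_1_right)
  ultimately show ?case by linarith
qed

lemma allseq_space:
  assumes "length (unused_indices n a) = r"
  shows "snd (snd (allseq D Q m n a L)) \<le> (m + 2) * r + 6 * m + 6"
  using assms
proof (induction r arbitrary: a L)
  case 0
  then show ?case by (simp add: allseq_cost_eqs(2)[of D Q m n a L])
next
  case (Suc r)
  have "max (snd (snd (refine D Q m i L)))
            (m + snd (snd (allseq D Q m n (a @ [i]) (fst (refine D Q m i L)))))
          \<le> (m + 2) * r + 7 * m + 6"
    if "i \<in> set (unused_indices n a)" for i
  proof -
    have "length (unused_indices n (a @ [i])) = r"
      using length_unused_indices_append[OF that] Suc.prems by simp
    then have "snd (snd (allseq D Q m n (a @ [i]) (fst (refine D Q m i L))))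
                 \<le> (m + 2) * r + 6 * m + 6"
      by (rule Suc.IH)
    then show ?thesis using refine_cost[of D Q m i L] by simp
  qed
  then show ?case
    by (simp only: allseq_cost_eqs(2)[of D Q m n a L]) (simp add: foldr_max_le algebra_simps)
qed

lemma arrangements_le_sum:
  assumes "1 \<le> n"
  shows "real (arrangements n) \<le> 2 * (\<Sum>i=1..n. fact n / fact (n - i))"
proof -
  let ?S = "\<Sum>i=1..n. fact n / fact (n - i) :: real"
  have nodes: "real (arrangements n) = 1 + ?S"
    using assms by (simp add: arrangements_eq_sum atMost_atLeast0 sum.atLeast_Suc_atMost)
  have "fact n / fact (n - n) \<le> ?S"
    using assms by (intro member_le_sum) auto
  then have "1 \<le> ?S"
    by (simp add: order_trans[OF fact_ge_1])
  with nodes show ?thesis by linarith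
qed

lemma qls_time_le: "qls_time D Q m n \<le> (10 * m + 3) * arrangements n"
  using allseq_time[of n "[]" n D Q m "replicate m 0"]
  by (simp add: qls_time_def unused_indices_def)

lemma qls_space_le:
  assumes "1 \<le> m" "1 \<le> n"
  shows "qls_space D Q m n \<le> 20 * (m * n)"
proof -
  have "qls_space D Q m n \<le> 3 * (m * n) + 7 * m + 4 * n + 6"
    using allseq_space[of n "[]" n D Q m "replicate m 0"]
    by (simp add: qls_space_def unused_indices_def algebra_simps)
  moreover have "m \<le> m * n" "n \<le> m * n" "1 \<le> m * n" using assms by simp_all
  ultimately show ?thesis by linarith
qed

theorem mainTheorem6:
  "\<exists>C::real. \<forall>(m::nat) (n::nat) (D::nat \<Rightarrow> nat \<Rightarrow> real) (Q::nat \<Rightarrow> nat \<Rightarrow> nat).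
     1 \<le> m \<longrightarrow> 1 \<le> n \<longrightarrow> col_sorting m n D Q \<longrightarrow>
       real (qls_time D Q m n)
         \<le> C * (real m * (\<Sum>i=1..n. real m * (fact n / fact (n - i))))
     \<and> real (qls_space D Q m n) \<le> C * (real m * real n)"
proof (intro exI allI impI conjI)
  fix m n :: nat and D :: "nat \<Rightarrow> nat \<Rightarrow> real" and Q :: "nat \<Rightarrow> nat \<Rightarrow> nat"
  assume m: "1 \<le> m" and n: "1 \<le> n"
  \<comment> \<open>The cost bounds hold for arbitrary \<open>D\<close> and \<open>Q\<close>.\<close>
  define S where "S = (\<Sum>i=1..n. fact n / fact (n - i) :: real)"
  have "0 \<le> S" unfolding S_def by (intro sum_nonneg) simp
  have "real (qls_time D Q m n) \<le> real ((10 * m + 3) * arrangements n)"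
    by (rule of_nat_mono[OF qls_time_le])
  also have "\<dots> = (10 * real m + 3) * real (arrangements n)" by simp
  also have "\<dots> \<le> (13 * real m) * (2 * S)"
    using m arrangements_le_sum[OF n] unfolding S_def by (intro mult_mono) auto
  also have "\<dots> = 26 * (real m * S)" by simp
  also have "\<dots> \<le> 26 * (real m * (real m * S))"
    using m \<open>0 \<le> S\<close> mult_right_mono[of 1 "real m" S] by simp
  finally show "real (qls_time D Q m n) \<le> 26 * (real m * (\<Sum>i=1..n. real m * (fact n / fact (n - i))))"
    by (simp add: S_def sum_distrib_left)
  show "real (qls_space D Q m n) \<le> 26 * (real m * real n)"
    using qls_space_le[OF m n, of D Q] by (simp flip: of_nat_mult)
qed

end
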